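(* Let $i,j\in[s]$ (equal or not). Every homomorphism from $F_i^{\bullet\bullet}$ to $F_j^{\bullet\bullet}$ (both viewed as ordinary digraphs), if one exists, is a bijection $V(F_i^{\bullet\bullet})\to V(F_j^{\bullet\bullet})$.
   Context: All digraphs are finite and loopless; a tournament is a digraph in which every pair of distinct vertices is joined by exactly one arc. A homomorphism from a digraph $F$ to a digraph $H$ is a map $\varphi:V(F)\to V(H)$ with $(\varphi(u),\varphi(v))\in E(H)$ whenever $(u,v)\in E(F)$. Construction of $F_i^{\bullet\bullet}$: fix $s\in\mathbb{N}^+$, a positive integer $m$, and a tournament $F_0$ on vertex set $[m]$ satisfying: (I) every vertex has out-degree and in-degree at most $2m/3$; (II) there are no disjoint $A_1,A_2\subseteq[m]$ with $|A_1|=|A_2|=\lceil\sqrt m\,\rceil$ such that $(a_1,a_2)$ is an arc for all $a_1\in A_1,a_2\in A_2$; (III) for every $S\subseteq[m]$ with $|S|\ge 2m/13-\sqrt m$, $F_0[S]$ contains a directed cycle. Let $k_1,\dots,k_s$ be integers in the open interval $(2m/3+2,\,5m/6)$ with $k_i>k_{i+1}+1$ for $1\le i<s$. For $i\in[s]$, $F_i^{\bullet\bullet}$ is the digraph on vertex set $[m]\cup\{z_i,w_i\}$ ($z_i,w_i$ two new vertices, called roots) whose arcs are all arcs of $F_0$, together with the arcs $z_i\to v$ and $v\to w_i$ for every $1\le v\le k_i$, and the arcs $u\to z_i$ and $w_i\to u$ for every $k_i<u\le m$. There is no arc between $z_i$ and $w_i$. *)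

theory Defs
  imports Complex_Main
begin

definition is_tournament :: "'a set \<Rightarrow> ('a \<times> 'a) set \<Rightarrow> bool" where
  "is_tournament V E \<longleftrightarrow> E \<subseteq> V \<times> V \<and> (\<forall>v. (v, v) \<notin> E) \<and>
     (\<forall>u\<in>V. \<forall>v\<in>V. u \<noteq> v \<longrightarrow> ((u, v) \<in> E \<longleftrightarrow> (v, u) \<notin> E))"

definition has_dicycle_in :: "('a \<times> 'a) set \<Rightarrow> 'a set \<Rightarrow> bool" where
  "has_dicycle_in E S \<longleftrightarrow> (\<exists>vs. length vs \<ge> 2 \<and> distinct vs \<and> set vs \<subseteq> S \<and>
     (\<forall>i < length vs. (vs ! i, vs ! ((i + 1) mod length vs)) \<in> E))"

definition is_hom :: "'a set \<Rightarrow> ('a \<times> 'a) set \<Rightarrow> 'b set \<Rightarrow> ('b \<times> 'b) set \<Rightarrow> ('a \<Rightarrow> 'b) \<Rightarrow> bool" where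
  "is_hom VF EF VH EH f \<longleftrightarrow> f ` VF \<subseteq> VH \<and> (\<forall>(u, v)\<in>EF. (f u, f v) \<in> EH)"

text \<open>Vertices of the rooted digraphs: base vertices 1..m and the two roots z, w.\<close>
datatype vtx = Base nat | Zr | Wr

definition Fbb_verts :: "nat \<Rightarrow> vtx set" where
  "Fbb_verts m = Base ` {1..m} \<union> {Zr, Wr}"

text \<open>Arcs of the digraph with cut parameter kk (i.e. F_i with kk = k_i).\<close>
definition Fbb_arcs :: "(nat \<times> nat) set \<Rightarrow> nat \<Rightarrow> nat \<Rightarrow> (vtx \<times> vtx) set" where
  "Fbb_arcs E0 m kk =
     {(Base u, Base v) | u v. (u, v) \<in> E0}
   \<union> {(Zr, Base v) | v. 1 \<le> v \<and> v \<le> kk}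
   \<union> {(Base v, Wr) | v. 1 \<le> v \<and> v \<le> kk}
   \<union> {(Base u, Zr) | u. kk < u \<and> u \<le> m}
   \<union> {(Wr, Base u) | u. kk < u \<and> u \<le> m}"

end

theory Submission
  imports Defs
begin

text \<open>The target digraph is oriented (no loops, no 2-cycles), so a homomorphism cannot identify the
ends of an arc, nor the ends of a directed path of length two. In \<open>F\<^sub>i\<^sup>\<bullet>\<^sup>\<bullet>\<close> any two distinct
vertices other than the two roots are adjacent, and the roots are joined through vertex 1
(\<open>z \<rightarrow> 1 \<rightarrow> w\<close> or \<open>w \<rightarrow> 1 \<rightarrow> z\<close>). Hence every homomorphism is injective, and an injective
self-map of a finite set is a bijection.\<close>

lemma is_hom_inj_on:
  assumes hom: "is_hom VF EF VH EH f" and asym: "asym EH"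
    and linked: "\<And>u v. u \<in> VF \<Longrightarrow> v \<in> VF \<Longrightarrow> u \<noteq> v \<Longrightarrow>
                   (u, v) \<in> EF \<union> EF O EF \<or> (v, u) \<in> EF \<union> EF O EF"
  shows "inj_on f VF"
proof (rule inj_onI, rule ccontr)
  have arc: "(f x, f y) \<in> EH" if "(x, y) \<in> EF" for x y
    using hom that unfolding is_hom_def by blast
  have no_collapse: "f x \<noteq> f y" if "(x, y) \<in> EF \<union> EF O EF" for x y
  proof
    assume eq: "f x = f y"
    from that show False
    proof
      assume "(x, y) \<in> EF"
      then show False using arc eq asymD[OF asym] by metis
    next
      assume "(x, y) \<in> EF O EF"
      then obtain z where "(x, z) \<in> EF" "(z, y) \<in> EF" by blast
      then show False using arc eq asymD[OF asym] by metis
    qed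
  qed
  fix u v assume "u \<in> VF" "v \<in> VF" "f u = f v" "u \<noteq> v"
  then show False using linked no_collapse by metis
qed

lemma is_hom_bij_betw_self:
  assumes "finite V" "is_hom V EF V EH f" "inj_on f V"
  shows "bij_betw f V V"
  using assms endo_inj_surj unfolding is_hom_def bij_betw_def by blast

lemma asym_Fbb_arcs:
  assumes "is_tournament {1..m} E0"
  shows "asym (Fbb_arcs E0 m kk)"
proof (rule asymI, rule notI)
  fix x y assume "(x, y) \<in> Fbb_arcs E0 m kk" "(y, x) \<in> Fbb_arcs E0 m kk"
  then obtain a b where "(a, b) \<in> E0" "(b, a) \<in> E0"
    unfolding Fbb_arcs_def by auto
  with assms show False unfolding is_tournament_def by (metis SigmaD1 SigmaD2 subsetD)
qed

lemma Fbb_arcs_linked: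
  assumes tour: "is_tournament {1..m} E0" and "m \<ge> 1"
    and u: "u \<in> Fbb_verts m" and v: "v \<in> Fbb_verts m" and "u \<noteq> v"
  shows "(u, v) \<in> Fbb_arcs E0 m kk \<union> Fbb_arcs E0 m kk O Fbb_arcs E0 m kk \<or>
         (v, u) \<in> Fbb_arcs E0 m kk \<union> Fbb_arcs E0 m kk O Fbb_arcs E0 m kk"
    (is "?linked u v")
proof -
  let ?E = "Fbb_arcs E0 m kk"
  have roots: "?linked Zr Wr"
  proof (cases "1 \<le> kk")
    case True
    then have "(Zr, Base 1) \<in> ?E" "(Base 1, Wr) \<in> ?E" unfolding Fbb_arcs_def by auto
    then show ?thesis by blast
  next
    case False
    then have "(Wr, Base 1) \<in> ?E" "(Base 1, Zr) \<in> ?E" using \<open>m \<ge> 1\<close> unfolding Fbb_arcs_def by auto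
    then show ?thesis by blast
  qed
  have tournament_arc: "(a, b) \<in> E0 \<or> (b, a) \<in> E0" if "a \<in> {1..m}" "b \<in> {1..m}" "a \<noteq> b" for a b
    using tour that unfolding is_tournament_def by blast
  have adjacent: "(u, v) \<in> ?E \<or> (v, u) \<in> ?E" if "{u, v} \<noteq> {Zr, Wr}"
  proof (cases u)
    case (Base a)
    with u have "a \<in> {1..m}" by (auto simp: Fbb_verts_def)
    show ?thesis
    proof (cases v)
      case (Base b)
      with v have "b \<in> {1..m}" by (auto simp: Fbb_verts_def)
      with \<open>a \<in> {1..m}\<close> \<open>u = Base a\<close> Base \<open>u \<noteq> v\<close> have "(a, b) \<in> E0 \<or> (b, a) \<in> E0"
        using tournament_arc by simp
      with \<open>u = Base a\<close> Base show ?thesis by (auto simp: Fbb_arcs_def)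
    qed (use \<open>a \<in> {1..m}\<close> Base in \<open>auto simp: Fbb_arcs_def not_le\<close>)
  next
    case Zr
    with that \<open>u \<noteq> v\<close> v obtain b where "v = Base b" "b \<in> {1..m}" by (cases v) (auto simp: Fbb_verts_def)
    with Zr show ?thesis by (auto simp: Fbb_arcs_def not_le)
  next
    case Wr
    with that \<open>u \<noteq> v\<close> v obtain b where "v = Base b" "b \<in> {1..m}" by (cases v) (auto simp: Fbb_verts_def)
    with Wr show ?thesis by (auto simp: Fbb_arcs_def not_le)
  qed
  show ?thesis
    using roots adjacent \<open>u \<noteq> v\<close> by (cases "{u, v} = {Zr, Wr}") (auto simp: doubleton_eq_iff)
qed

theorem claim4p3:
  fixes m s :: nat and E0 :: "(nat \<times> nat) set" and k :: "nat \<Rightarrow> int"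
    and i j :: nat and \<phi> :: "vtx \<Rightarrow> vtx"
  assumes spos: "s \<ge> 1" and mpos: "m \<ge> 1"
    and tour: "is_tournament {1..m} E0"
    and degI: "\<forall>u\<in>{1..m}. real (card {v. (u, v) \<in> E0}) \<le> 2 * real m / 3
                          \<and> real (card {v. (v, u) \<in> E0}) \<le> 2 * real m / 3"
    and condII: "\<not> (\<exists>A1 A2. A1 \<subseteq> {1..m} \<and> A2 \<subseteq> {1..m} \<and> A1 \<inter> A2 = {} \<and>
                   int (card A1) = \<lceil>sqrt (real m)\<rceil> \<and> int (card A2) = \<lceil>sqrt (real m)\<rceil> \<and>
                   (\<forall>a1\<in>A1. \<forall>a2\<in>A2. (a1, a2) \<in> E0))"
    and condIII: "\<forall>S\<subseteq>{1..m}. real (card S) \<ge> 2 * real m / 13 - sqrt (real m)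
                     \<longrightarrow> has_dicycle_in E0 S"
    and krange: "\<forall>t\<in>{1..s}. 2 * real m / 3 + 2 < real_of_int (k t) \<and> real_of_int (k t) < 5 * real m / 6"
    and kdec: "\<forall>t. 1 \<le> t \<and> t < s \<longrightarrow> k t > k (t + 1) + 1"
    and ij: "i \<in> {1..s}" "j \<in> {1..s}"
    and hom: "is_hom (Fbb_verts m) (Fbb_arcs E0 m (nat (k i))) (Fbb_verts m) (Fbb_arcs E0 m (nat (k j))) \<phi>"
  shows "bij_betw \<phi> (Fbb_verts m) (Fbb_verts m)"
proof -
  have "inj_on \<phi> (Fbb_verts m)"
    using hom asym_Fbb_arcs[OF tour] Fbb_arcs_linked[OF tour mpos] by (rule is_hom_inj_on)
  moreover have "finite (Fbb_verts m)" unfolding Fbb_verts_def by simp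
  ultimately show ?thesis using hom by (intro is_hom_bij_betw_self)
qed

end
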